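(* Let $G$ be a group, $\mathcal{O}$ a conjugacy class of $G$, and $H$ a subgroup of $G$ such that $\mathcal{O}$ contains two distinct conjugacy classes $\mathcal{O}_1,\mathcal{O}_2$ of $H$. Assume there exist $r\in\mathcal{O}_1$ and $s\in\mathcal{O}_2$ such that $(rs)^2$ does not belong to the centralizer of $r$ in $G$. Then $\mathcal{O}$ is of type D.
   Context: A conjugacy class $\mathcal{O}$ of a group (regarded as a rack with $x\triangleright y=xyx^{-1}$) is of type D iff there exist $r,s\in\mathcal{O}$ with $(rs)^2\neq(sr)^2$ such that $r$ and $s$ are not conjugate in the subgroup $\langle r,s\rangle$. (In rack terms: a rack is of type D if it contains a subrack that is a disjoint union $R\sqcup S$ of two subracks with $r\triangleright(s\triangleright(r\triangleright s))\neq s$ for some $r\in R$, $s\in S$.) *)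

theory Defs
  imports "HOL-Algebra.Algebra"
begin

text \<open>Conjugacy class of x under conjugation by elements of K (K = carrier G gives the
conjugacy class in G; K = H a subgroup and x in H gives the conjugacy class in H).\<close>
definition conj_class_in :: "('a, 'b) monoid_scheme \<Rightarrow> 'a set \<Rightarrow> 'a \<Rightarrow> 'a set" where
  "conj_class_in G K x = {g \<otimes>\<^bsub>G\<^esub> x \<otimes>\<^bsub>G\<^esub> inv\<^bsub>G\<^esub> g | g. g \<in> K}"

definition is_conj_class :: "('a, 'b) monoid_scheme \<Rightarrow> 'a set \<Rightarrow> 'a set \<Rightarrow> bool" where
  "is_conj_class G K C \<longleftrightarrow> (\<exists>x\<in>K. C = conj_class_in G K x)"

definition centralizer :: "('a, 'b) monoid_scheme \<Rightarrow> 'a \<Rightarrow> 'a set" where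
  "centralizer G x = {g \<in> carrier G. g \<otimes>\<^bsub>G\<^esub> x = x \<otimes>\<^bsub>G\<^esub> g}"

definition type_D :: "('a, 'b) monoid_scheme \<Rightarrow> 'a set \<Rightarrow> bool" where
  "type_D G Cl \<longleftrightarrow> (\<exists>r\<in>Cl. \<exists>s\<in>Cl.
      (r \<otimes>\<^bsub>G\<^esub> s) [^]\<^bsub>G\<^esub> (2::nat) \<noteq> (s \<otimes>\<^bsub>G\<^esub> r) [^]\<^bsub>G\<^esub> (2::nat) \<and>
      \<not> (\<exists>g \<in> generate G {r, s}. g \<otimes>\<^bsub>G\<^esub> r \<otimes>\<^bsub>G\<^esub> inv\<^bsub>G\<^esub> g = s))"

end

theory Submission
  imports Defs
begin

text \<open>Two elements of the same \<open>G\<close>-class lying in different \<open>H\<close>-classes cannot be conjugate in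
  \<open>\<langle>r, s\<rangle> \<subseteq> H\<close>; and \<open>r (sr)\<^sup>2 = (rs)\<^sup>2 r\<close> turns \<open>(rs)\<^sup>2 = (sr)\<^sup>2\<close> into \<open>(rs)\<^sup>2\<close> centralizing \<open>r\<close>.\<close>

lemma (in group) conj_class_in_subset:
  assumes "subgroup H G" "x \<in> H"
  shows "conj_class_in G H x \<subseteq> H"
  using assms unfolding conj_class_in_def
  by (auto intro!: subgroup.m_closed subgroup.m_inv_closed)

lemma (in group) conj_class_in_trans:
  assumes "subgroup H G" "x \<in> H" "y \<in> conj_class_in G H x" "z \<in> conj_class_in G H y"
  shows "z \<in> conj_class_in G H x"
proof -
  have HG: "H \<subseteq> carrier G" using assms(1) subgroup.subset by blast
  obtain h where h: "h \<in> H" "y = h \<otimes> x \<otimes> inv h"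
    using assms(3) unfolding conj_class_in_def by blast
  obtain k where k: "k \<in> H" "z = k \<otimes> y \<otimes> inv k"
    using assms(4) unfolding conj_class_in_def by blast
  have "h \<in> carrier G" "k \<in> carrier G" "x \<in> carrier G" using h k HG assms(2) by auto
  then have "z = (k \<otimes> h) \<otimes> x \<otimes> inv (k \<otimes> h)"
    using h k by (simp add: inv_mult_group m_assoc)
  moreover have "k \<otimes> h \<in> H" using h k assms(1) by (simp add: subgroup.m_closed)
  ultimately show ?thesis unfolding conj_class_in_def by blast
qed

lemma (in group) conj_class_in_sym:
  assumes "subgroup H G" "x \<in> H" "y \<in> conj_class_in G H x"
  shows "x \<in> conj_class_in G H y"
proof -
  have HG: "H \<subseteq> carrier G" using assms(1) subgroup.subset by blast
  obtain h where h: "h \<in> H" "y = h \<otimes> x \<otimes> inv h"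
    using assms(3) unfolding conj_class_in_def by blast
  then have hx: "h \<in> carrier G" "x \<in> carrier G" using HG assms(2) by auto
  have "inv h \<otimes> y \<otimes> inv (inv h) = x"
    using h(2) hx by (simp add: m_assoc inv_solve_left')
  moreover have "inv h \<in> H" using h(1) assms(1) by (simp add: subgroup.m_inv_closed)
  ultimately show ?thesis unfolding conj_class_in_def by blast
qed

lemma (in group) conj_class_in_eq:
  assumes "subgroup H G" "x \<in> H" "y \<in> conj_class_in G H x"
  shows "conj_class_in G H y = conj_class_in G H x"
proof -
  have "y \<in> H" using assms conj_class_in_subset by blast
  then show ?thesis
    using assms conj_class_in_trans conj_class_in_sym by blast
qed

lemma (in group) is_conj_class_member:
  assumes "subgroup H G" "is_conj_class G H C" "r \<in> C"
  shows "r \<in> H" and "C = conj_class_in G H r"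
proof -
  obtain x where x: "x \<in> H" "C = conj_class_in G H x"
    using assms(2) unfolding is_conj_class_def by blast
  show "r \<in> H" using x assms(1,3) conj_class_in_subset by blast
  show "C = conj_class_in G H r" using x assms(1,3) conj_class_in_eq by simp
qed

lemma (in group) not_conj_in_generate:
  assumes "subgroup H G" "r \<in> H" "s \<in> H" "s \<notin> conj_class_in G H r"
  shows "\<not> (\<exists>g \<in> generate G {r, s}. g \<otimes> r \<otimes> inv g = s)"
proof -
  have "generate G {r, s} \<subseteq> H"
    using assms(1-3) by (intro generate_subgroup_incl) auto
  then show ?thesis using assms(4) unfolding conj_class_in_def by blast
qed

lemma (in group) mult_pow_swap:
  assumes "r \<in> carrier G" "s \<in> carrier G"
  shows "r \<otimes> (s \<otimes> r) [^] (n::nat) = (r \<otimes> s) [^] n \<otimes> r"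
proof (induction n)
  case 0
  then show ?case using assms by simp
next
  case (Suc n)
  have "r \<otimes> (s \<otimes> r) [^] Suc n = (r \<otimes> (s \<otimes> r) [^] n) \<otimes> (s \<otimes> r)"
    using assms by (simp add: m_assoc)
  also have "\<dots> = (r \<otimes> s) [^] Suc n \<otimes> r"
    using assms by (simp add: Suc m_assoc)
  finally show ?case .
qed

lemma (in group) pow_eq_swap_in_centralizer:
  assumes "r \<in> carrier G" "s \<in> carrier G" "(r \<otimes> s) [^] (n::nat) = (s \<otimes> r) [^] n"
  shows "(r \<otimes> s) [^] n \<in> centralizer G r"
  using assms mult_pow_swap[of r s n] unfolding centralizer_def by simp

theorem lemma2p5:
  fixes G (structure) and Cl Cl1 Cl2 H :: "'a set" and r s :: 'a
  assumes "group G"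
    and "is_conj_class G (carrier G) Cl"
    and "subgroup H G"
    and "is_conj_class G H Cl1" and "is_conj_class G H Cl2"
    and "Cl1 \<subseteq> Cl" and "Cl2 \<subseteq> Cl" and "Cl1 \<noteq> Cl2"
    and "r \<in> Cl1" and "s \<in> Cl2"
    and "(r \<otimes> s) [^] (2::nat) \<notin> centralizer G r"
  shows "type_D G Cl"
proof -
  interpret group G by fact
  have rH: "r \<in> H" and Cl1: "Cl1 = conj_class_in G H r"
    using is_conj_class_member assms(3,4,9) by blast+
  have sH: "s \<in> H" and Cl2: "Cl2 = conj_class_in G H s"
    using is_conj_class_member assms(3,5,10) by blast+
  have "s \<notin> conj_class_in G H r"
    using conj_class_in_eq[OF assms(3) rH] Cl1 Cl2 assms(8) by blast
  then have not_conj: "\<not> (\<exists>g \<in> generate G {r, s}. g \<otimes> r \<otimes> inv g = s)"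
    using not_conj_in_generate assms(3) rH sH by blast
  have "r \<in> carrier G" "s \<in> carrier G"
    using rH sH subgroup.mem_carrier[OF assms(3)] by auto
  then have "(r \<otimes> s) [^] (2::nat) \<noteq> (s \<otimes> r) [^] (2::nat)"
    using pow_eq_swap_in_centralizer assms(11) by blast
  then show ?thesis
    unfolding type_D_def using not_conj assms(6,7,9,10) by blast
qed

end
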